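(* Let $\mathbb{K}=(K,+,0)$ be a positive commutative monoid and let $H$ be a hypergraph. If $H$ has the local-to-global consistency property for $\mathbb{K}$-relations, then $H$ is acyclic.
   Context: A commutative monoid $\mathbb{K}=(K,+,0)$ is positive if $p+q=0$ implies $p=q=0$; all monoids are assumed to have at least two elements. An attribute $A$ has an associated domain $\mathrm{Dom}(A)$ (attribute domains are arbitrary sets and may be chosen as needed). For a finite set $X$ of attributes, $\mathrm{Tup}(X)$ is the set of functions assigning to each $A\in X$ an element of $\mathrm{Dom}(A)$ ($X$-tuples); for $Y\subseteq X$ and $t\in\mathrm{Tup}(X)$, $t[Y]$ is the restriction of $t$ to $Y$. A $\mathbb{K}$-relation over $X$ is a function $R:\mathrm{Tup}(X)\to K$ whose support $R'=\{t:R(t)\neq 0\}$ is finite. For $Y\subseteq X$ the marginal $R[Y]$ is the $\mathbb{K}$-relation over $Y$ with $R[Y](t)=\sum_{r\in R',\,r[Y]=t}R(r)$. For a sequence $X_1,\dots,X_m$ of finite attribute sets (a schema) and $\mathbb{K}$-relations $R_i$ over $X_i$, the collection $R_1,\dots,R_m$ is $k$-wise consistent if for every $q\le k$ and indices $i_1,\dots,i_q\in[m]$ there is a $\mathbb{K}$-relation $W$ over $X_{i_1}\cup\dots\cup X_{i_q}$ with $W[X_{i_j}]=R_{i_j}$ for all $j$; pairwise consistent means $2$-wise, globally consistent means $m$-wise. A hypergraph $H=(V,E)$ (finite, hyperedges non-empty subsets of $V$) is identified with the schema listing its hyperedges, vertices viewed as attributes. $H$ has the local-to-global consistency property for $\mathbb{K}$-relations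 if, for a listing $X_1,\dots,X_m$ of its hyperedges, every pairwise consistent collection of $\mathbb{K}$-relations $R_1(X_1),\dots,R_m(X_m)$ is globally consistent. $H$ is acyclic (in the sense of Beeri, Fagin, Maier, Yannakakis) iff it has a join tree: a tree whose vertices are the hyperedges of $H$ such that for every vertex $v$ of $H$, the hyperedges containing $v$ form a connected subtree. *)

theory Defs
  imports Main "HOL-Library.FuncSet"
begin

definition positive_monoid :: "'k::comm_monoid_add itself \<Rightarrow> bool" where
  "positive_monoid _ \<longleftrightarrow> (\<forall>p q::'k. p + q = 0 \<longrightarrow> p = 0 \<and> q = 0) \<and> (\<exists>x::'k. x \<noteq> 0)"

text \<open>X-tuples over domains Dom are the extensional functions in PiE X Dom.
  A K-relation over X: finitely supported, support contained in Tup(X).\<close>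
definition is_krel :: "('v \<Rightarrow> 'd set) \<Rightarrow> 'v set \<Rightarrow> (('v \<Rightarrow> 'd) \<Rightarrow> 'k::zero) \<Rightarrow> bool" where
  "is_krel Dom X R \<longleftrightarrow> finite {t. R t \<noteq> 0} \<and> (\<forall>t. R t \<noteq> 0 \<longrightarrow> t \<in> PiE X Dom)"

definition marginal :: "(('v \<Rightarrow> 'd) \<Rightarrow> 'k::comm_monoid_add) \<Rightarrow> 'v set \<Rightarrow> ('v \<Rightarrow> 'd) \<Rightarrow> 'k" where
  "marginal R Y = (\<lambda>t. \<Sum>r\<in>{r. R r \<noteq> 0 \<and> restrict r Y = t}. R r)"

definition consistent_on ::
  "('v \<Rightarrow> 'd set) \<Rightarrow> 'v set set \<Rightarrow> ('v set \<Rightarrow> ('v \<Rightarrow> 'd) \<Rightarrow> 'k::comm_monoid_add) \<Rightarrow> bool" where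
  "consistent_on Dom F R \<longleftrightarrow>
     (\<exists>W. is_krel Dom (\<Union>F) W \<and> (\<forall>X\<in>F. marginal W X = R X))"

definition hypergraph :: "'v set \<Rightarrow> 'v set set \<Rightarrow> bool" where
  "hypergraph V E \<longleftrightarrow> finite V \<and> (\<forall>e\<in>E. e \<noteq> {} \<and> e \<subseteq> V)"

definition local_to_global ::
  "'k::comm_monoid_add itself \<Rightarrow> 'd itself \<Rightarrow> 'v set set \<Rightarrow> bool" where
  "local_to_global _ _ E \<longleftrightarrow>
     (\<forall>(Dom::'v \<Rightarrow> 'd set) (R::'v set \<Rightarrow> ('v \<Rightarrow> 'd) \<Rightarrow> 'k).
        (\<forall>X\<in>E. is_krel Dom X (R X)) \<longrightarrow>
        (\<forall>X\<in>E. \<forall>Y\<in>E. consistent_on Dom {X, Y} R) \<longrightarrow>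
        consistent_on Dom E R)"

text \<open>Undirected graph on vertex set N with edge set T (2-element sets); connectivity
  of a vertex subset S within the induced subgraph; trees.\<close>
definition connected_in :: "'a set set \<Rightarrow> 'a set \<Rightarrow> bool" where
  "connected_in T S \<longleftrightarrow>
     (\<forall>a\<in>S. \<forall>b\<in>S. (a, b) \<in> {(x, y). {x, y} \<in> T \<and> x \<in> S \<and> y \<in> S}\<^sup>*)"

definition is_tree :: "'a set \<Rightarrow> 'a set set \<Rightarrow> bool" where
  "is_tree N T \<longleftrightarrow> finite N \<and> N \<noteq> {} \<and>
     T \<subseteq> {{a, b} | a b. a \<in> N \<and> b \<in> N \<and> a \<noteq> b} \<and>
     connected_in T N \<and> card T + 1 = card N"

definition join_tree :: "'v set set \<Rightarrow> 'v set set set \<Rightarrow> bool" where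
  "join_tree E T \<longleftrightarrow> is_tree E T \<and>
     (\<forall>v. connected_in T {e \<in> E. v \<in> e})"

definition acyclic_hg :: "'v set set \<Rightarrow> bool" where
  "acyclic_hg E \<longleftrightarrow> E = {} \<or> (\<exists>T. join_tree E T)"

end

theory Submission
  imports Defs
begin

text \<open>
  Acyclicity is characterised by GYO reduction: if every nonempty set \<open>S\<close> of vertices contains a
  vertex lying in at most one maximal trace \<open>X \<inter> S\<close> of the hyperedges, then repeatedly
  discarding a hyperedge covered by another one and deleting a vertex that lies in a single
  hyperedge builds a join tree.

  Otherwise some \<open>S\<close> has every vertex in two maximal traces, and a Tseitin-style parity
  construction violates the local-to-global property. The value at a vertex of \<open>S\<close> is an even
  set of maximal traces through it; the constraint of a maximal trace \<open>T\<close> demands that an odd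
  number of its vertices choose \<open>T\<close> exactly when \<open>T = T0\<close>. Summing over all traces, a global
  tuple would have to produce an odd total from even contributions; by positivity of the monoid
  every tuple in the support of a global witness satisfies all constraints, so there is none.
  Two constraints are always compatible, though: flipping the choice of one vertex of
  \<open>Y \<inter> S\<close> outside \<open>X\<close> at two of its traces toggles only the parity of \<open>Y \<inter> S\<close>, so exactly half
  of the extensions of a tuple on \<open>X\<close> satisfy the constraint of \<open>Y\<close>, and weighting the
  relations accordingly makes all pairwise marginals agree.
\<close>

section \<open>Join trees\<close>

lemma connected_in_mono:
  assumes "connected_in T C" "T \<subseteq> T'"
  shows "connected_in T' C"
proof -
  have "{(x, y). {x, y} \<in> T \<and> x \<in> C \<and> y \<in> C} \<subseteq> {(x, y). {x, y} \<in> T' \<and> x \<in> C \<and> y \<in> C}"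
    using assms(2) by auto
  then show ?thesis
    using assms(1) rtrancl_mono unfolding connected_in_def by blast
qed

lemma connected_in_subsingleton:
  assumes "\<And>a b. a \<in> C \<Longrightarrow> b \<in> C \<Longrightarrow> a = b"
  shows "connected_in T C"
  using assms unfolding connected_in_def by auto

lemma connected_in_insert_leaf:
  assumes "connected_in T C" "A \<in> C"
  shows "connected_in (insert {B, A} T) (insert B C)"
proof -
  let ?R = "{(x, y). {x, y} \<in> insert {B, A} T \<and> x \<in> insert B C \<and> y \<in> insert B C}"
  have "{(x, y). {x, y} \<in> T \<and> x \<in> C \<and> y \<in> C} \<subseteq> ?R" by auto
  then have old: "(a, b) \<in> ?R\<^sup>*" if "a \<in> C" "b \<in> C" for a b
    using assms(1) that rtrancl_mono unfolding connected_in_def by blast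
  have "(B, A) \<in> ?R" "(A, B) \<in> ?R" using assms(2) by (auto simp: insert_commute)
  then have to_A: "(x, A) \<in> ?R\<^sup>* \<and> (A, x) \<in> ?R\<^sup>*" if "x \<in> insert B C" for x
    using that old[OF _ assms(2)] old[OF assms(2)] by auto
  show ?thesis
    unfolding connected_in_def
  proof (intro ballI)
    fix a b assume "a \<in> insert B C" "b \<in> insert B C"
    then have "(a, A) \<in> ?R\<^sup>*" "(A, b) \<in> ?R\<^sup>*" using to_A by blast+
    then show "(a, b) \<in> ?R\<^sup>*" by (rule rtrancl_trans)
  qed
qed

lemma connected_in_image:
  assumes "connected_in T C"
  shows "connected_in ((`) g ` T) (g ` C)"
proof -
  let ?R = "{(x, y). {x, y} \<in> T \<and> x \<in> C \<and> y \<in> C}"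
  let ?R' = "{(x, y). {x, y} \<in> (`) g ` T \<and> x \<in> g ` C \<and> y \<in> g ` C}"
  have "(g a, g b) \<in> ?R'\<^sup>*" if "(a, b) \<in> ?R\<^sup>*" for a b
    using that
  proof (induction rule: rtrancl_induct)
    case (step y z)
    then have "(g y, g z) \<in> ?R'" by (auto intro!: image_eqI[where x="{y, z}"])
    then show ?case using step.IH by (meson rtrancl_into_rtrancl)
  qed simp
  then show ?thesis using assms unfolding connected_in_def by blast
qed

lemma is_tree_finite_edges:
  assumes "is_tree N T"
  shows "finite T"
proof -
  have "T \<subseteq> Pow N" "finite N" using assms unfolding is_tree_def by auto
  then show ?thesis by (meson finite_Pow_iff finite_subset)
qed

lemma is_tree_insert_leaf:
  assumes "is_tree N T" "A \<in> N" "B \<notin> N"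
  shows "is_tree (insert B N) (insert {B, A} T)"
proof -
  have edges: "T \<subseteq> {{a, b} | a b. a \<in> N \<and> b \<in> N \<and> a \<noteq> b}"
    and N: "finite N" "card T + 1 = card N" "connected_in T N"
    using assms(1) unfolding is_tree_def by auto
  have "{B, A} \<notin> T" using edges assms(3) by (auto simp: doubleton_eq_iff)
  then have "card (insert {B, A} T) + 1 = card (insert B N)"
    using is_tree_finite_edges[OF assms(1)] N assms(3) by simp
  moreover have "insert {B, A} T \<subseteq> {{a, b} | a b. a \<in> insert B N \<and> b \<in> insert B N \<and> a \<noteq> b}"
    using edges assms(2,3) by blast
  ultimately show ?thesis
    using N connected_in_insert_leaf[OF N(3) assms(2)] unfolding is_tree_def by auto
qed

lemma is_tree_image:
  assumes "is_tree N T" "inj_on g N"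
  shows "is_tree (g ` N) ((`) g ` T)"
proof -
  have edges: "T \<subseteq> {{a, b} | a b. a \<in> N \<and> b \<in> N \<and> a \<noteq> b}"
    using assms(1) unfolding is_tree_def by auto
  have "inj_on ((`) g) T"
    using inj_on_image_Pow[OF assms(2)] by (rule inj_on_subset) (use edges in auto)
  then have "card ((`) g ` T) = card T" by (rule card_image)
  moreover have "card (g ` N) = card N" using assms(2) by (rule card_image)
  moreover have "(`) g ` T \<subseteq> {{a, b} | a b. a \<in> g ` N \<and> b \<in> g ` N \<and> a \<noteq> b}"
    using edges assms(2) by (fastforce dest: inj_on_contraD)
  ultimately show ?thesis
    using assms(1) connected_in_image[of T N g] unfolding is_tree_def by auto
qed

lemma join_tree_singleton_empty: "join_tree {{}} {}"
  unfolding join_tree_def is_tree_def connected_in_def by auto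

lemma join_tree_insert_covered:
  assumes "join_tree F T" "A \<in> F" "B \<subseteq> A" "B \<notin> F"
  shows "join_tree (insert B F) (insert {B, A} T)"
  unfolding join_tree_def
proof (intro conjI allI)
  show "is_tree (insert B F) (insert {B, A} T)"
    using is_tree_insert_leaf[of F T A B] assms(1,2,4) unfolding join_tree_def by blast
  fix u
  have old: "connected_in T {e \<in> F. u \<in> e}" using assms(1) unfolding join_tree_def by blast
  show "connected_in (insert {B, A} T) {e \<in> insert B F. u \<in> e}"
  proof (cases "u \<in> B")
    case True
    then have "{e \<in> insert B F. u \<in> e} = insert B {e \<in> F. u \<in> e}" "A \<in> {e \<in> F. u \<in> e}"
      using assms(2,3) by auto
    then show ?thesis using connected_in_insert_leaf[OF old] by presburger
  next
    case False
    then have "{e \<in> insert B F. u \<in> e} = {e \<in> F. u \<in> e}" by auto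
    then show ?thesis using connected_in_mono[OF old, of "insert {B, A} T"] by auto
  qed
qed

lemma join_tree_delete_vertex:
  assumes "join_tree ((\<lambda>X. X - {v}) ` F) T" "inj_on (\<lambda>X. X - {v}) F"
    and "\<And>X Y. X \<in> F \<Longrightarrow> Y \<in> F \<Longrightarrow> v \<in> X \<Longrightarrow> v \<in> Y \<Longrightarrow> X = Y"
  shows "join_tree F ((`) (inv_into F (\<lambda>X. X - {v})) ` T)"
  unfolding join_tree_def
proof (intro conjI allI)
  let ?del = "\<lambda>X. X - {v}" and ?g = "inv_into F (\<lambda>X. X - {v})"
  have g_image: "?g ` ?del ` F = F" using assms(2) by (rule inv_into_image_cancel) simp
  have "is_tree (?del ` F) T" using assms(1) unfolding join_tree_def by blast
  then have "is_tree (?g ` ?del ` F) ((`) ?g ` T)"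
    by (intro is_tree_image inj_on_inv_into) auto
  then show "is_tree F ((`) ?g ` T)" unfolding g_image .
  fix u
  show "connected_in ((`) ?g ` T) {e \<in> F. u \<in> e}"
  proof (cases "u = v")
    case True
    then show ?thesis using assms(3) by (intro connected_in_subsingleton) auto
  next
    case False
    have "{e \<in> F. u \<in> e} = ?g ` {e \<in> ?del ` F. u \<in> e}"
    proof (intro equalityI subsetI)
      fix X assume X: "X \<in> {e \<in> F. u \<in> e}"
      then have "X = ?g (?del X)" "?del X \<in> {e \<in> ?del ` F. u \<in> e}"
        using False inv_into_f_f[OF assms(2), of X] by auto
      then show "X \<in> ?g ` {e \<in> ?del ` F. u \<in> e}" by blast
    next
      fix Y assume "Y \<in> ?g ` {e \<in> ?del ` F. u \<in> e}"
      then obtain X where "X \<in> F" "u \<in> X - {v}" "Y = ?g (X - {v})" by auto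
      then show "Y \<in> {e \<in> F. u \<in> e}" using inv_into_f_f[OF assms(2), of X] by auto
    qed
    moreover have "connected_in T {e \<in> ?del ` F. u \<in> e}"
      using assms(1) unfolding join_tree_def by blast
    ultimately show ?thesis using connected_in_image[of T _ ?g] by presburger
  qed
qed

section \<open>GYO reduction\<close>

definition maximal_sets :: "'a set set \<Rightarrow> 'a set set" where
  "maximal_sets \<A> = {A \<in> \<A>. \<forall>B\<in>\<A>. A \<subseteq> B \<longrightarrow> A = B}"

lemma maximal_sets_cofinal_subset:
  assumes "\<A>' \<subseteq> \<A>" "\<And>A. A \<in> \<A> \<Longrightarrow> \<exists>A'\<in>\<A>'. A \<subseteq> A'"
  shows "maximal_sets \<A>' = maximal_sets \<A>"
proof (intro equalityI subsetI)
  fix A assume A: "A \<in> maximal_sets \<A>'"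
  have "A = B" if "B \<in> \<A>" "A \<subseteq> B" for B
  proof -
    obtain B' where "B' \<in> \<A>'" "B \<subseteq> B'" using assms(2) \<open>B \<in> \<A>\<close> by blast
    then have "A = B'" using A \<open>A \<subseteq> B\<close> unfolding maximal_sets_def by blast
    then show "A = B" using \<open>A \<subseteq> B\<close> \<open>B \<subseteq> B'\<close> by blast
  qed
  then show "A \<in> maximal_sets \<A>" using A assms(1) unfolding maximal_sets_def by blast
next
  fix A assume A: "A \<in> maximal_sets \<A>"
  then obtain A' where "A' \<in> \<A>'" "A \<subseteq> A'" using assms(2) unfolding maximal_sets_def by blast
  then show "A \<in> maximal_sets \<A>'" using A assms(1) unfolding maximal_sets_def by blast
qed

lemma maximal_sets_antichain:
  assumes "\<And>A B. A \<in> \<A> \<Longrightarrow> B \<in> \<A> \<Longrightarrow> A \<subseteq> B \<Longrightarrow> A = B"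
  shows "maximal_sets \<A> = \<A>"
  using assms unfolding maximal_sets_def by blast

definition max_traces :: "'v set set \<Rightarrow> 'v set \<Rightarrow> 'v set set" where
  "max_traces F S = maximal_sets ((\<lambda>X. X \<inter> S) ` F)"

definition gyo_reducible :: "'v set set \<Rightarrow> bool" where
  "gyo_reducible F \<longleftrightarrow>
     (\<forall>S \<subseteq> \<Union>F. S \<noteq> {} \<longrightarrow> (\<exists>v\<in>S. card {T \<in> max_traces F S. v \<in> T} \<le> 1))"

lemma gyo_reducible_Diff_covered:
  assumes "gyo_reducible F" "A \<in> F" "B \<subset> A"
  shows "gyo_reducible (F - {B})"
proof -
  have "max_traces (F - {B}) S = max_traces F S" for S
    unfolding max_traces_def using assms(2,3) by (intro maximal_sets_cofinal_subset) auto
  moreover have "\<Union>(F - {B}) = \<Union>F" using assms(2,3) by auto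
  ultimately show ?thesis using assms(1) unfolding gyo_reducible_def by simp
qed

lemma gyo_reducible_delete_vertex:
  assumes "gyo_reducible F"
  shows "gyo_reducible ((\<lambda>X. X - {v}) ` F)"
proof -
  have "max_traces ((\<lambda>X. X - {v}) ` F) S = max_traces F S" if "v \<notin> S" for S
    unfolding max_traces_def image_image using that
    by (intro arg_cong[where f=maximal_sets] image_cong) auto
  moreover have "S \<subseteq> \<Union>F \<and> v \<notin> S" if "S \<subseteq> \<Union>((\<lambda>X. X - {v}) ` F)" for S
    using that by auto
  ultimately show ?thesis using assms unfolding gyo_reducible_def by metis
qed

lemma acyclic_hg_insert_covered:
  assumes "acyclic_hg F" "A \<in> F" "B \<subseteq> A" "B \<notin> F"
  shows "acyclic_hg (insert B F)"
  using assms join_tree_insert_covered unfolding acyclic_hg_def by blast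

lemma acyclic_hg_delete_vertex:
  assumes "acyclic_hg ((\<lambda>X. X - {v}) ` F)" "inj_on (\<lambda>X. X - {v}) F"
    and "\<And>X Y. X \<in> F \<Longrightarrow> Y \<in> F \<Longrightarrow> v \<in> X \<Longrightarrow> v \<in> Y \<Longrightarrow> X = Y"
  shows "acyclic_hg F"
  using assms(1) join_tree_delete_vertex[OF _ assms(2,3)] unfolding acyclic_hg_def by blast

lemma gyo_reducible_antichainE:
  assumes "gyo_reducible F" "finite F" "\<Union>F \<noteq> {}" "\<forall>A\<in>F. \<forall>B\<in>F. A \<subseteq> B \<longrightarrow> A = B"
  obtains v where "v \<in> \<Union>F" "\<And>X Y. X \<in> F \<Longrightarrow> Y \<in> F \<Longrightarrow> v \<in> X \<Longrightarrow> v \<in> Y \<Longrightarrow> X = Y"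
proof -
  have "max_traces F (\<Union>F) = F"
    unfolding max_traces_def using assms(4)
    by (simp add: Int_absorb2 Sup_upper maximal_sets_antichain)
  then obtain v where "v \<in> \<Union>F" "card {X \<in> F. v \<in> X} \<le> 1"
    using assms(1,3) unfolding gyo_reducible_def by (metis subset_refl)
  with assms(2) show ?thesis using that by (auto simp: card_le_Suc0_iff_eq)
qed

lemma inj_on_Diff_singleton_antichain:
  assumes "\<forall>A\<in>F. \<forall>B\<in>F. A \<subseteq> B \<longrightarrow> A = B"
  shows "inj_on (\<lambda>X. X - {v}) F"
proof (rule inj_onI)
  fix X Y assume "X \<in> F" "Y \<in> F" "X - {v} = Y - {v}"
  then have "X \<subseteq> Y \<or> Y \<subseteq> X" by blast
  then show "X = Y" using assms \<open>X \<in> F\<close> \<open>Y \<in> F\<close> by auto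
qed

lemma gyo_reducible_imp_acyclic:
  assumes "finite (\<Union>F)" "gyo_reducible F"
  shows "acyclic_hg F"
  using assms
proof (induction "card F + card (\<Union>F)" arbitrary: F rule: less_induct)
  case less
  have "finite F" using less.prems(1) by (rule finite_UnionD)
  consider (no_vertices) "\<Union>F = {}"
    | (covered) A B where "A \<in> F" "B \<in> F" "B \<subset> A"
    | (antichain) "\<Union>F \<noteq> {}" "\<forall>A\<in>F. \<forall>B\<in>F. A \<subseteq> B \<longrightarrow> A = B"
    by blast
  then show ?case
  proof cases
    case no_vertices
    then have "F \<subseteq> {{}}" by blast
    then have "F = {} \<or> F = {{}}" by (simp add: subset_singleton_iff)
    then show ?thesis using join_tree_singleton_empty unfolding acyclic_hg_def by blast
  next
    case covered
    have "\<Union>(F - {B}) = \<Union>F" using covered by auto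
    moreover have "card (F - {B}) < card F" using \<open>finite F\<close> covered(2) by (rule card_Diff1_less)
    ultimately have "acyclic_hg (F - {B})"
      using less.hyps less.prems(1) gyo_reducible_Diff_covered[OF less.prems(2) covered(1,3)]
      by (metis add_less_mono1)
    then have "acyclic_hg (insert B (F - {B}))"
      using covered by (intro acyclic_hg_insert_covered) auto
    then show ?thesis using covered(2) by (simp add: insert_absorb)
  next
    case antichain
    obtain v where v: "v \<in> \<Union>F" and unique: "\<And>X Y. X \<in> F \<Longrightarrow> Y \<in> F \<Longrightarrow> v \<in> X \<Longrightarrow> v \<in> Y \<Longrightarrow> X = Y"
      using gyo_reducible_antichainE[OF less.prems(2) \<open>finite F\<close> antichain] by blast
    let ?del = "\<lambda>X. X - {v}"
    have inj: "inj_on ?del F" using antichain(2) by (rule inj_on_Diff_singleton_antichain)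
    have "\<Union>(?del ` F) = \<Union>F - {v}" by auto
    then have "card (?del ` F) + card (\<Union>(?del ` F)) < card F + card (\<Union>F)"
      and "finite (\<Union>(?del ` F))"
      using card_image[OF inj] card_Diff1_less[OF less.prems(1) v] less.prems(1) by simp_all
    then have "acyclic_hg (?del ` F)"
      using less.hyps gyo_reducible_delete_vertex[OF less.prems(2)] by blast
    then show ?thesis using inj unique by (rule acyclic_hg_delete_vertex)
  qed
qed

section \<open>Counting\<close>

primrec nat_scale :: "nat \<Rightarrow> 'k::comm_monoid_add \<Rightarrow> 'k" where
  "nat_scale 0 c = 0"
| "nat_scale (Suc n) c = c + nat_scale n c"

lemma nat_scale_add: "nat_scale (m + n) c = nat_scale m c + nat_scale n c"
  by (induction m) (simp_all add: add.assoc)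

lemma nat_scale_mult: "nat_scale (m * n) c = nat_scale m (nat_scale n c)"
  by (induction m) (simp_all add: nat_scale_add)

lemma sum_constant_nat_scale: "(\<Sum>x\<in>A. c) = nat_scale (card A) c"
proof (cases "finite A")
  case True
  then show ?thesis by (induction A rule: finite_induct) simp_all
qed simp

lemma sum_nonzero_if_zero_sum_free:
  fixes f :: "'a \<Rightarrow> 'k::comm_monoid_add"
  assumes zero_sum_free: "\<And>p q::'k. p + q = 0 \<Longrightarrow> p = 0"
    and "finite A" "a \<in> A" "f a \<noteq> 0"
  shows "sum f A \<noteq> 0"
  using zero_sum_free[of "f a" "sum f (A - {a})"] sum.remove[OF assms(2,3), of f] assms(4) by auto

lemma nat_scale_nonzero_if_zero_sum_free:
  fixes c :: "'k::comm_monoid_add"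
  assumes "\<And>p q::'k. p + q = 0 \<Longrightarrow> p = 0" "c \<noteq> 0" "n > 0"
  shows "nat_scale n c \<noteq> 0"
  using assms by (cases n) auto

lemma even_card_sym_diff:
  assumes "finite A" "finite B"
  shows "even (card (sym_diff A B)) \<longleftrightarrow> (even (card A) \<longleftrightarrow> even (card B))"
proof -
  have "card (sym_diff A B \<union> (A \<inter> B)) = card (sym_diff A B) + card (A \<inter> B)"
    using assms by (intro card_Un_disjoint) auto
  moreover have "sym_diff A B \<union> (A \<inter> B) = A \<union> B" by blast
  ultimately have "card A + card B = card (sym_diff A B) + 2 * card (A \<inter> B)"
    using card_Un_Int[OF assms] by simp
  then have "even (card A + card B) \<longleftrightarrow> even (card (sym_diff A B) + 2 * card (A \<inter> B))"
    by simp
  then show ?thesis by simp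
qed

lemma card_filter_eq_sum:
  "finite A \<Longrightarrow> card {x \<in> A. P x} = (\<Sum>x\<in>A. if P x then 1 else 0)"
  by (simp add: sum.inter_filter[symmetric])

lemma card_filter_swapped_by_involution:
  assumes "finite A" "\<And>a. a \<in> A \<Longrightarrow> \<sigma> a \<in> A" "\<And>a. a \<in> A \<Longrightarrow> \<sigma> (\<sigma> a) = a"
    and "\<And>a. a \<in> A \<Longrightarrow> Q (\<sigma> a) \<longleftrightarrow> \<not> Q a"
  shows "2 * card {a \<in> A. Q a} = card A"
proof -
  have "bij_betw \<sigma> {a \<in> A. Q a} {a \<in> A. \<not> Q a}"
    by (rule bij_betw_byWitness[where f'=\<sigma>]) (use assms(2-4) in auto)
  then have "card {a \<in> A. Q a} = card {a \<in> A. \<not> Q a}" by (rule bij_betw_same_card)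
  moreover have "card {a \<in> A. Q a} + card {a \<in> A. \<not> Q a} = card ({a \<in> A. Q a} \<union> {a \<in> A. \<not> Q a})"
    using assms(1) by (intro card_Un_disjoint[symmetric]) auto
  moreover have "{a \<in> A. Q a} \<union> {a \<in> A. \<not> Q a} = A" by blast
  ultimately show ?thesis by simp
qed

lemma card_extensions:
  assumes "t \<in> PiE X Dom" "finite Y"
  shows "card {r \<in> PiE (X \<union> Y) Dom. restrict r X = t} = (\<Prod>w\<in>Y - X. card (Dom w))"
proof -
  let ?Ext = "{r \<in> PiE (X \<union> Y) Dom. restrict r X = t}"
  let ?glue = "\<lambda>u v. if v \<in> X then t v else u v"
  have "bij_betw (\<lambda>r. restrict r (Y - X)) ?Ext (PiE (Y - X) Dom)"
  proof (rule bij_betw_byWitness[where f'="?glue"])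
    have "?glue (restrict r (Y - X)) v = r v" if "r \<in> ?Ext" for r v
      using that fun_cong[of "restrict r X" t v] by (cases "v \<in> Y") (auto simp: PiE_iff extensional_def)
    then show "\<forall>r\<in>?Ext. ?glue (restrict r (Y - X)) = r" by blast
    show "\<forall>u\<in>PiE (Y - X) Dom. restrict (?glue u) (Y - X) = u"
      by (auto simp: PiE_iff extensional_def fun_eq_iff)
    show "(\<lambda>r. restrict r (Y - X)) ` ?Ext \<subseteq> PiE (Y - X) Dom"
      unfolding image_subset_iff restrict_PiE_iff by (auto simp: PiE_iff)
    show "?glue ` PiE (Y - X) Dom \<subseteq> ?Ext"
      using assms(1) by (auto simp: PiE_iff extensional_def fun_eq_iff)
  qed
  then show ?thesis using assms(2) by (simp add: bij_betw_same_card card_PiE)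
qed

lemma marginal_indicator:
  assumes "k \<noteq> 0"
  shows "marginal (\<lambda>r. if Q r then k else 0) X t = nat_scale (card {r. Q r \<and> restrict r X = t}) k"
proof -
  have "{r. (if Q r then k else 0) \<noteq> 0 \<and> restrict r X = t} = {r. Q r \<and> restrict r X = t}"
    using assms by auto
  then have "marginal (\<lambda>r. if Q r then k else 0) X t = (\<Sum>r\<in>{r. Q r \<and> restrict r X = t}. k)"
    unfolding marginal_def by (auto intro: sum.cong)
  then show ?thesis by (simp add: sum_constant_nat_scale)
qed

lemma is_krel_indicator:
  assumes "\<And>r. Q r \<Longrightarrow> r \<in> PiE X Dom" "finite X" "\<And>v. v \<in> X \<Longrightarrow> finite (Dom v)"
  shows "is_krel Dom X (\<lambda>r. if Q r then k else 0)"
proof -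
  have support: "{r. (if Q r then k else 0) \<noteq> 0} \<subseteq> PiE X Dom" using assms(1) by auto
  moreover have "finite (PiE X Dom)" using assms(2,3) by (rule finite_PiE)
  ultimately have "finite {r. (if Q r then k else 0) \<noteq> 0}" by (rule finite_subset)
  then show ?thesis using support unfolding is_krel_def by blast
qed

section \<open>The parity construction\<close>

locale parity_construction =
  fixes E :: "'v set set" and S :: "'v set" and enc :: "'v set set \<Rightarrow> 'd"
    and T0 :: "'v set" and c :: "'k::comm_monoid_add"
  assumes finite_vertices: "finite (\<Union>E)"
    and two_traces: "\<And>v. v \<in> S \<Longrightarrow> 2 \<le> card {T \<in> max_traces E S. v \<in> T}"
    and inj_enc: "inj_on enc (Pow (max_traces E S))"
    and T0: "T0 \<in> max_traces E S" "T0 \<noteq> {}"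
    and zero_sum_free: "\<And>p q::'k. p + q = 0 \<Longrightarrow> p = 0"
    and c_nonzero: "c \<noteq> 0"
begin

abbreviation F :: "'v set set" where
  "F \<equiv> max_traces E S"

abbreviation U :: "'v set" where
  "U \<equiv> \<Union>E"

definition star :: "'v \<Rightarrow> 'v set set" where
  "star v = {T \<in> F. v \<in> T}"

definition choices :: "'v \<Rightarrow> 'v set set set" where
  "choices v = {A. A \<subseteq> star v \<and> even (card A)}"

definition Dom :: "'v \<Rightarrow> 'd set" where
  "Dom v = enc ` choices v"

definition dec :: "'d \<Rightarrow> 'v set set" where
  "dec = the_inv_into (Pow F) enc"

definition votes :: "'v set \<Rightarrow> ('v \<Rightarrow> 'd) \<Rightarrow> nat" where
  "votes T t = card {v \<in> T. T \<in> dec (t v)}"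

definition satisfies :: "('v \<Rightarrow> 'd) \<Rightarrow> 'v set \<Rightarrow> bool" where
  "satisfies t T \<longleftrightarrow> (T \<in> F \<longrightarrow> (odd (votes T t) \<longleftrightarrow> T = T0))"

definition dom_card :: "'v set \<Rightarrow> nat" where
  "dom_card A = (\<Prod>w\<in>A. card (Dom w))"

definition weight :: "'v set \<Rightarrow> nat" where
  "weight X = (if X \<inter> S \<in> F then 2 else 1)"

definition pair_weight :: "'v set \<Rightarrow> 'v set \<Rightarrow> nat" where
  "pair_weight X Y = (if X \<inter> S = Y \<inter> S then weight X else weight X * weight Y)"

text \<open>
  Marginalising \<open>W X Y\<close> onto \<open>X\<close> multiplies by \<open>dom_card (Y - X)\<close>, halved when \<open>Y \<inter> S\<close> is a
  maximal trace different from \<open>X \<inter> S\<close>; the weights are chosen so that the result is \<open>R X\<close>.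
\<close>

definition R :: "'v set \<Rightarrow> ('v \<Rightarrow> 'd) \<Rightarrow> 'k" where
  "R X = (\<lambda>t. if t \<in> PiE X Dom \<and> satisfies t (X \<inter> S)
     then nat_scale (weight X * dom_card (U - X)) c else 0)"

definition W :: "'v set \<Rightarrow> 'v set \<Rightarrow> ('v \<Rightarrow> 'd) \<Rightarrow> 'k" where
  "W X Y = (\<lambda>t. if t \<in> PiE (X \<union> Y) Dom \<and> satisfies t (X \<inter> S) \<and> satisfies t (Y \<inter> S)
     then nat_scale (pair_weight X Y * dom_card (U - (X \<union> Y))) c else 0)"

lemma finite_F: "finite F"
proof -
  have "finite E" using finite_vertices by (rule finite_UnionD)
  then show ?thesis unfolding max_traces_def maximal_sets_def by simp
qed

lemma F_trace: "T \<in> F \<Longrightarrow> \<exists>X\<in>E. X \<inter> S = T"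
  unfolding max_traces_def maximal_sets_def by auto

lemma F_subset_S: "T \<in> F \<Longrightarrow> T \<subseteq> S"
  using F_trace by blast

lemma F_maximal: "T \<in> F \<Longrightarrow> X \<in> E \<Longrightarrow> T \<subseteq> X \<inter> S \<Longrightarrow> T = X \<inter> S"
  unfolding max_traces_def maximal_sets_def by blast

lemma S_subset: "S \<subseteq> U"
proof -
  have "star v \<noteq> {}" if "v \<in> S" for v
    using two_traces[OF that] unfolding star_def by (metis card.empty not_numeral_le_zero)
  then show ?thesis unfolding star_def using F_trace by blast
qed

lemma finite_S: "finite S"
  using S_subset finite_vertices by (rule finite_subset)

lemma choices_subset_Pow: "choices v \<subseteq> Pow F"
  unfolding choices_def star_def by auto

lemma finite_Dom: "finite (Dom v)"
  unfolding Dom_def using choices_subset_Pow finite_F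
  by (meson finite_Pow_iff finite_imageI finite_subset)

lemma dom_card_pos: "dom_card A > 0"
proof -
  have "enc {} \<in> Dom v" for v unfolding Dom_def choices_def by force
  then have "card (Dom v) > 0" for v using finite_Dom card_gt_0_iff by blast
  then show ?thesis unfolding dom_card_def by (simp add: prod_pos)
qed

lemma dec_enc: "A \<in> Pow F \<Longrightarrow> dec (enc A) = A"
  unfolding dec_def using inj_enc by (rule the_inv_into_f_f)

lemma dec_in_choices:
  assumes "y \<in> Dom v"
  shows "dec y \<in> choices v" "enc (dec y) = y"
proof -
  obtain A where "A \<in> choices v" "y = enc A" using assms unfolding Dom_def by blast
  moreover then have "dec y = A" using choices_subset_Pow dec_enc by blast
  ultimately show "dec y \<in> choices v" "enc (dec y) = y" by simp_all
qed

lemma satisfies_cong: "(\<And>v. v \<in> T \<Longrightarrow> t v = t' v) \<Longrightarrow> satisfies t T \<longleftrightarrow> satisfies t' T"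
  unfolding satisfies_def votes_def by (metis (mono_tags, lifting) Collect_cong)

lemma satisfies_restrict: "T \<subseteq> X \<Longrightarrow> satisfies (restrict t X) T \<longleftrightarrow> satisfies t T"
  by (rule satisfies_cong) auto

lemma other_trace:
  assumes "w \<in> S" "T \<in> star w"
  obtains T' where "T' \<in> star w" "T' \<noteq> T"
proof -
  have "\<not> star w \<subseteq> {T}"
    using two_traces[OF assms(1)] card_mono[of "{T}" "star w"] unfolding star_def by auto
  then show ?thesis using that by blast
qed

lemma satisfies_flip:
  assumes "T \<in> F" "w \<in> T" "\<And>v. v \<noteq> w \<Longrightarrow> t' v = t v"
    and "T \<in> dec (t' w) \<longleftrightarrow> T \<notin> dec (t w)"
  shows "satisfies t' T \<longleftrightarrow> \<not> satisfies t T"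
proof -
  have "{v \<in> T. T \<in> dec (t' v)} = sym_diff {v \<in> T. T \<in> dec (t v)} {w}"
    using assms(2-4) by auto
  moreover have "finite T" using F_subset_S[OF assms(1)] finite_S by (rule finite_subset)
  ultimately have "even (votes T t') \<longleftrightarrow> \<not> even (votes T t)"
    unfolding votes_def using even_card_sym_diff[of "{v \<in> T. T \<in> dec (t v)}" "{w}"] by simp
  then show ?thesis unfolding satisfies_def using assms(1) by auto
qed

lemma sym_diff_pair_in_choices:
  assumes "A \<in> choices w" "T \<in> star w" "T' \<in> star w" "T \<noteq> T'"
  shows "sym_diff A {T, T'} \<in> choices w"
proof -
  have "A \<subseteq> star w" "even (card A)" "finite A"
    using assms(1) finite_F unfolding choices_def star_def by (auto dest: finite_subset)
  then show ?thesis
    unfolding choices_def using assms(2-4) even_card_sym_diff[of A "{T, T'}"] by auto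
qed

lemma card_satisfying_extensions_half:
  assumes t: "t \<in> PiE X Dom" and "finite Y" and T: "Y \<inter> S \<in> F" and w: "w \<in> Y \<inter> S" "w \<notin> X"
  shows "2 * card {r \<in> PiE (X \<union> Y) Dom. restrict r X = t \<and> satisfies r (Y \<inter> S)} = dom_card (Y - X)"
proof -
  define T where "T = Y \<inter> S"
  define Ext where "Ext = {r \<in> PiE (X \<union> Y) Dom. restrict r X = t}"
  have "T \<in> star w" using T w unfolding T_def star_def by auto
  then obtain T' where T': "T' \<in> star w" "T' \<noteq> T" using other_trace w(1) by blast
  define flip where "flip r = r(w := enc (sym_diff (dec (r w)) {T, T'}))" for r :: "'v \<Rightarrow> 'd"
  have flip: "flip r \<in> Ext" "dec (flip r w) = sym_diff (dec (r w)) {T, T'}" if r: "r \<in> Ext" for r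
  proof -
    have "r w \<in> Dom w" using r w unfolding Ext_def by (auto simp: PiE_iff)
    then have choice_flip: "sym_diff (dec (r w)) {T, T'} \<in> choices w"
      using dec_in_choices(1) \<open>T \<in> star w\<close> T' by (intro sym_diff_pair_in_choices) auto
    then have "flip r \<in> PiE (X \<union> Y) Dom"
      using r w unfolding Ext_def flip_def Dom_def by (auto simp: PiE_iff extensional_def)
    then show "flip r \<in> Ext" using r w(2) unfolding Ext_def flip_def by auto
    have "sym_diff (dec (r w)) {T, T'} \<in> Pow F" using choice_flip choices_subset_Pow by blast
    then show "dec (flip r w) = sym_diff (dec (r w)) {T, T'}" unfolding flip_def by (simp add: dec_enc)
  qed
  have involution: "flip (flip r) = r" if r: "r \<in> Ext" for r
  proof -
    have "sym_diff (sym_diff (dec (r w)) {T, T'}) {T, T'} = dec (r w)" by blast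
    then have "flip (flip r) = r(w := enc (dec (r w)))"
      unfolding flip_def[of "flip r"] flip(2)[OF r] by (simp add: flip_def)
    moreover have "r w \<in> Dom w" using r w unfolding Ext_def by (auto simp: PiE_iff)
    ultimately show ?thesis using dec_in_choices(2) by simp
  qed
  have swap: "satisfies (flip r) T \<longleftrightarrow> \<not> satisfies r T" if r: "r \<in> Ext" for r
    using T w T' flip(2)[OF r] unfolding T_def by (intro satisfies_flip) (auto simp: flip_def)
  have card_Ext: "card Ext = dom_card (Y - X)"
    unfolding Ext_def dom_card_def using t \<open>finite Y\<close> by (rule card_extensions)
  then have "finite Ext" using dom_card_pos[of "Y - X"] by (intro card_ge_0_finite) simp
  then have "2 * card {r \<in> Ext. satisfies r T} = dom_card (Y - X)"
    unfolding card_Ext[symmetric] using flip(1) involution swap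
    by (rule card_filter_swapped_by_involution[where \<sigma>=flip and Q="\<lambda>r. satisfies r T"])
  moreover have "{r \<in> Ext. satisfies r T} = {r \<in> PiE (X \<union> Y) Dom. restrict r X = t \<and> satisfies r (Y \<inter> S)}"
    unfolding Ext_def T_def by blast
  ultimately show ?thesis by simp
qed

lemma finite_edge: "X \<in> E \<Longrightarrow> finite X"
  using finite_vertices by (meson Sup_upper finite_subset)

lemma card_satisfying_extensions:
  assumes X: "X \<in> E" and Y: "Y \<in> E" and t: "t \<in> PiE X Dom" "satisfies t (X \<inter> S)"
  shows "card {r \<in> PiE (X \<union> Y) Dom. restrict r X = t \<and> satisfies r (Y \<inter> S)} * pair_weight X Y
    = weight X * dom_card (Y - X)"
proof -
  let ?Ext = "{r \<in> PiE (X \<union> Y) Dom. restrict r X = t}"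
  have "finite Y" using Y by (rule finite_edge)
  have card_Ext: "card ?Ext = dom_card (Y - X)"
    unfolding dom_card_def using t(1) \<open>finite Y\<close> by (rule card_extensions)
  consider (same) "X \<inter> S = Y \<inter> S" | (not_max) "X \<inter> S \<noteq> Y \<inter> S" "Y \<inter> S \<notin> F"
    | (max) "X \<inter> S \<noteq> Y \<inter> S" "Y \<inter> S \<in> F" by blast
  then show ?thesis
  proof cases
    case same
    have "Y \<inter> S \<subseteq> X" using same by blast
    then have "satisfies r (Y \<inter> S)" if "r \<in> ?Ext" for r
      using that t(2) satisfies_restrict[of "Y \<inter> S" X r] unfolding same by auto
    then have "{r \<in> PiE (X \<union> Y) Dom. restrict r X = t \<and> satisfies r (Y \<inter> S)} = ?Ext" by blast
    then show ?thesis using card_Ext same unfolding pair_weight_def by simp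
  next
    case not_max
    then have "{r \<in> PiE (X \<union> Y) Dom. restrict r X = t \<and> satisfies r (Y \<inter> S)} = ?Ext"
      unfolding satisfies_def by blast
    then show ?thesis using card_Ext not_max unfolding pair_weight_def weight_def by simp
  next
    case max
    have "\<not> Y \<inter> S \<subseteq> X"
      using F_maximal[OF max(2) X] max(1) by blast
    then obtain w where "w \<in> Y \<inter> S" "w \<notin> X" by blast
    then have "2 * card {r \<in> PiE (X \<union> Y) Dom. restrict r X = t \<and> satisfies r (Y \<inter> S)} = dom_card (Y - X)"
      by (rule card_satisfying_extensions_half[OF t(1) \<open>finite Y\<close> max(2)])
    then show ?thesis using max unfolding pair_weight_def weight_def by simp
  qed
qed

lemma dom_card_split:
  assumes "Y \<subseteq> U"
  shows "dom_card (U - (X \<union> Y)) * dom_card (Y - X) = dom_card (U - X)"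
proof -
  have "U - X = (U - (X \<union> Y)) \<union> (Y - X)" using assms by blast
  moreover have "finite (U - (X \<union> Y))" "finite (Y - X)"
    using finite_vertices assms by (auto intro: finite_subset)
  moreover have "(U - (X \<union> Y)) \<inter> (Y - X) = {}" by blast
  ultimately show ?thesis
    unfolding dom_card_def by (simp add: prod.union_disjoint)
qed

lemma marginal_W:
  assumes X: "X \<in> E" and Y: "Y \<in> E"
  shows "marginal (W X Y) X = R X"
proof
  fix t
  let ?N = "pair_weight X Y * dom_card (U - (X \<union> Y))"
  let ?Z = "{r. (r \<in> PiE (X \<union> Y) Dom \<and> satisfies r (X \<inter> S) \<and> satisfies r (Y \<inter> S))
    \<and> restrict r X = t}"
  have "?N > 0" using dom_card_pos unfolding pair_weight_def weight_def by simp
  with zero_sum_free c_nonzero have "nat_scale ?N c \<noteq> 0" by (rule nat_scale_nonzero_if_zero_sum_free)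
  then have marginal: "marginal (W X Y) X t = nat_scale (card ?Z * ?N) c"
    unfolding W_def nat_scale_mult by (rule marginal_indicator)
  show "marginal (W X Y) X t = R X t"
  proof (cases "t \<in> PiE X Dom \<and> satisfies t (X \<inter> S)")
    case True
    then have "?Z = {r \<in> PiE (X \<union> Y) Dom. restrict r X = t \<and> satisfies r (Y \<inter> S)}"
      using satisfies_restrict[of "X \<inter> S" X] by auto
    then have "card ?Z * pair_weight X Y = weight X * dom_card (Y - X)"
      using card_satisfying_extensions[OF X Y] True by simp
    then have "card ?Z * ?N = weight X * dom_card (Y - X) * dom_card (U - (X \<union> Y))"
      by (simp add: mult.assoc[symmetric])
    also have "\<dots> = weight X * dom_card (U - X)"
      using dom_card_split[of Y X] Y by (simp add: Sup_upper mult.assoc mult.commute)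
    finally show ?thesis using marginal True unfolding R_def by simp
  next
    case False
    have "t \<in> PiE X Dom \<and> satisfies t (X \<inter> S)" if "r \<in> ?Z" for r
      using that satisfies_restrict[of "X \<inter> S" X r] by (auto simp: restrict_PiE_iff PiE_iff)
    then have "?Z = {}" using False by blast
    then have "marginal (W X Y) X t = 0" unfolding marginal by (simp only: card.empty) simp
    moreover have "R X t = 0" unfolding R_def by (rule if_not_P[OF False])
    ultimately show ?thesis by simp
  qed
qed

lemma W_commute: "W X Y = W Y X"
proof -
  have "pair_weight X Y = pair_weight Y X" unfolding pair_weight_def weight_def by auto
  moreover have "X \<union> Y = Y \<union> X" by (rule Un_commute)
  ultimately show ?thesis unfolding W_def by (metis (no_types, opaque_lifting))
qed

lemma is_krel_R: "X \<in> E \<Longrightarrow> is_krel Dom X (R X)"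
  unfolding R_def by (rule is_krel_indicator) (simp_all add: finite_edge finite_Dom)

lemma pairwise_consistent:
  assumes "X \<in> E" "Y \<in> E"
  shows "consistent_on Dom {X, Y} R"
proof -
  have "is_krel Dom (X \<union> Y) (W X Y)"
    unfolding W_def by (rule is_krel_indicator) (simp_all add: assms finite_edge finite_Dom)
  moreover have "marginal (W X Y) X = R X" "marginal (W X Y) Y = R Y"
    using marginal_W[OF assms] marginal_W[OF assms(2,1)] W_commute by simp_all
  ultimately show ?thesis unfolding consistent_on_def by auto
qed

lemma R_nonzero:
  obtains X t where "X \<in> E" "R X t \<noteq> 0"
proof -
  obtain X where X: "X \<in> E" "X \<inter> S = T0" using F_trace[OF T0(1)] by blast
  obtain w where "w \<in> T0" using T0(2) by blast
  then have "2 * card {r \<in> PiE ({} \<union> X) Dom. restrict r {} = (\<lambda>_. undefined) \<and> satisfies r (X \<inter> S)}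
      = dom_card (X - {})"
    using X T0(1) finite_edge by (intro card_satisfying_extensions_half) auto
  then have "{r \<in> PiE X Dom. satisfies r (X \<inter> S)} \<noteq> {}"
    using dom_card_pos[of "X - {}"] by (auto simp: restrict_def simp del: Collect_empty_eq)
  then obtain t where t: "t \<in> PiE X Dom" "satisfies t (X \<inter> S)" by blast
  have "weight X * dom_card (U - X) > 0" using dom_card_pos unfolding weight_def by simp
  with zero_sum_free c_nonzero have "nat_scale (weight X * dom_card (U - X)) c \<noteq> 0"
    by (rule nat_scale_nonzero_if_zero_sum_free)
  then have "R X t \<noteq> 0" using t unfolding R_def by simp
  with X(1) show ?thesis by (rule that)
qed

lemma satisfies_support:
  assumes G: "is_krel Dom U G" "\<And>X. X \<in> E \<Longrightarrow> marginal G X = R X"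
    and "G g \<noteq> 0" "T \<in> F"
  shows "satisfies g T"
proof -
  obtain X where X: "X \<in> E" "X \<inter> S = T" using F_trace[OF assms(4)] by blast
  have "finite {r. G r \<noteq> 0 \<and> restrict r X = restrict g X}"
    using G(1) unfolding is_krel_def by (simp add: Collect_conj_eq)
  then have "marginal G X (restrict g X) \<noteq> 0"
    unfolding marginal_def using assms(3) by (simp add: sum_nonzero_if_zero_sum_free[OF zero_sum_free])
  then have "R X (restrict g X) \<noteq> 0" using G(2)[OF X(1)] by simp
  then have "satisfies (restrict g X) (X \<inter> S)" unfolding R_def by (auto split: if_splits)
  then show ?thesis using satisfies_restrict[of "X \<inter> S" X g] X(2) by (metis inf_le1)
qed

lemma even_sum_votes:
  assumes "g \<in> PiE U Dom"
  shows "even (\<Sum>T\<in>F. votes T g)"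
proof -
  have choice: "dec (g v) \<in> choices v" if "v \<in> S" for v
    using assms that S_subset dec_in_choices(1) by (auto simp: PiE_iff)
  have "votes T g = (\<Sum>v\<in>S. if v \<in> T \<and> T \<in> dec (g v) then 1 else 0)" if "T \<in> F" for T
  proof -
    have "{v \<in> T. T \<in> dec (g v)} = {v \<in> S. v \<in> T \<and> T \<in> dec (g v)}"
      using F_subset_S[OF that] by blast
    then show ?thesis unfolding votes_def using finite_S by (simp add: card_filter_eq_sum)
  qed
  then have "(\<Sum>T\<in>F. votes T g) = (\<Sum>v\<in>S. \<Sum>T\<in>F. if v \<in> T \<and> T \<in> dec (g v) then 1 else 0)"
    using sum.swap by simp
  also have "\<dots> = (\<Sum>v\<in>S. card (dec (g v)))"
  proof (rule sum.cong)
    fix v assume "v \<in> S"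
    then have "{T \<in> F. v \<in> T \<and> T \<in> dec (g v)} = dec (g v)"
      using choice unfolding choices_def star_def by blast
    then show "(\<Sum>T\<in>F. if v \<in> T \<and> T \<in> dec (g v) then 1 else 0) = card (dec (g v))"
      using card_filter_eq_sum[OF finite_F, of "\<lambda>T. v \<in> T \<and> T \<in> dec (g v)"] by simp
  qed simp
  finally show ?thesis using choice unfolding choices_def by (simp add: dvd_sum)
qed

lemma not_globally_consistent: "\<not> consistent_on Dom E R"
proof
  assume "consistent_on Dom E R"
  then obtain G where G: "is_krel Dom U G" "\<And>X. X \<in> E \<Longrightarrow> marginal G X = R X"
    unfolding consistent_on_def by blast
  obtain X t where "X \<in> E" "R X t \<noteq> 0" by (rule R_nonzero)
  then have "marginal G X t \<noteq> 0" using G(2) by simp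
  then have "{r. G r \<noteq> 0 \<and> restrict r X = t} \<noteq> {}" unfolding marginal_def by (metis sum.empty)
  then obtain g where g: "G g \<noteq> 0" by blast
  then have "g \<in> PiE U Dom" using G(1) unfolding is_krel_def by blast
  have odd_votes: "odd (votes T g) \<longleftrightarrow> T = T0" if "T \<in> F" for T
    using satisfies_support[OF G g that] that unfolding satisfies_def by blast
  have "(\<Sum>T\<in>F. votes T g) = votes T0 g + (\<Sum>T\<in>F - {T0}. votes T g)"
    using finite_F T0(1) by (rule sum.remove)
  moreover have "even (\<Sum>T\<in>F - {T0}. votes T g)" using odd_votes by (auto intro: dvd_sum)
  ultimately have "odd (\<Sum>T\<in>F. votes T g)" using odd_votes T0(1) by simp
  then show False using even_sum_votes[OF \<open>g \<in> PiE U Dom\<close>] by contradiction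
qed

end

lemma local_to_global_imp_gyo_reducible:
  fixes E :: "'v set set" and c :: "'k::comm_monoid_add"
  assumes "\<And>p q::'k. p + q = 0 \<Longrightarrow> p = 0" "c \<noteq> 0"
    and "infinite (UNIV :: 'd set)" "finite (\<Union>E)"
    and "local_to_global TYPE('k) TYPE('d) E"
  shows "gyo_reducible E"
proof (rule ccontr)
  assume "\<not> gyo_reducible E"
  then obtain S where "S \<noteq> {}" and "\<forall>v\<in>S. \<not> card {T \<in> max_traces E S. v \<in> T} \<le> 1"
    unfolding gyo_reducible_def by blast
  then have two_traces: "2 \<le> card {T \<in> max_traces E S. v \<in> T}" if "v \<in> S" for v
    using that by fastforce
  obtain v where "v \<in> S" using \<open>S \<noteq> {}\<close> by blast
  then have "{T \<in> max_traces E S. v \<in> T} \<noteq> {}"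
    using two_traces by (metis card.empty not_numeral_le_zero)
  then obtain T0 where T0: "T0 \<in> max_traces E S" "T0 \<noteq> {}" by blast
  have "finite (max_traces E S)"
    using finite_UnionD[OF assms(4)] unfolding max_traces_def maximal_sets_def by simp
  then obtain B :: "'d set" where "finite B" "card B = card (Pow (max_traces E S))"
    using infinite_arbitrarily_large[OF assms(3)] by blast
  then obtain enc where "bij_betw enc (Pow (max_traces E S)) B"
    using \<open>finite (max_traces E S)\<close> by (metis finite_Pow_iff finite_same_card_bij)
  then have "inj_on enc (Pow (max_traces E S))" by (rule bij_betw_imp_inj_on)
  then interpret parity_construction E S enc T0 c
    using assms(1,2,4) two_traces T0 by unfold_locales
  have "consistent_on Dom E R"
    using assms(5) is_krel_R pairwise_consistent unfolding local_to_global_def by blast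
  then show False using not_globally_consistent by contradiction
qed

theorem theorem5:
  fixes V :: "'v set" and E :: "'v set set"
  assumes "positive_monoid TYPE('k::comm_monoid_add)"
    and "infinite (UNIV :: 'd set)"
    and "hypergraph V E"
    and "local_to_global TYPE('k) TYPE('d) E"
  shows "acyclic_hg E"
proof -
  obtain c :: 'k where "c \<noteq> 0" and "\<And>p q::'k. p + q = 0 \<Longrightarrow> p = 0"
    using assms(1) unfolding positive_monoid_def by blast
  moreover have "finite (\<Union>E)"
    using assms(3) unfolding hypergraph_def by (meson Sup_least finite_subset)
  ultimately have "gyo_reducible E"
    using assms(2,4) by (intro local_to_global_imp_gyo_reducible)
  with \<open>finite (\<Union>E)\<close> show ?thesis by (rule gyo_reducible_imp_acyclic)
qed

end
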